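(* Let $(\mathcal B^0,\|\cdot\|_0)$ and $(\mathcal B^1,\|\cdot\|_1)$ be Banach spaces over $\mathbb K\in\{\mathbb R,\mathbb C\}$ with $\mathcal B^1\subset\mathcal B^0$ as a linear subspace, and let $\mathcal L:\mathcal B^1\to\mathcal B^0$ be a linear operator. The following are equivalent: (a) $\mathcal L$ is weak bounded; (b) whenever $f_\epsilon,f\in\mathcal B^1$ satisfy $\|f_\epsilon-f\|_0\to0$ as $\epsilon\to0$ and $\sup_{\epsilon>0}\|f_\epsilon\|_1<+\infty$, then $\|\mathcal Lf_\epsilon-\mathcal Lf\|_0\to0$ as $\epsilon\to0$; (c) $\sup\{\|\mathcal Lf\|_0:\ f\in\mathcal B^1,\ \|f\|_1\le1,\ \|f\|_0\le\delta\}\to0$ as $\delta\to0$.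
   Context: A linear operator $\mathcal L:\mathcal B^1\to\mathcal B^0$ is called weak bounded if for every $\epsilon>0$ there is a constant $c(\epsilon)>0$ such that $\|\mathcal Lf\|_0\le c(\epsilon)\|f\|_0+\epsilon\|f\|_1$ for all $f\in\mathcal B^1$. *)

theory Defs
  imports "HOL-Analysis.Analysis"
begin

text \<open>B^0 is the ambient Banach space (type 'a with its norm); B^1 is a linear
subspace S of it, equipped with its own norm n1 under which it is complete.\<close>

definition is_norm_on :: "'a::real_vector set \<Rightarrow> ('a \<Rightarrow> real) \<Rightarrow> bool" where
  "is_norm_on S n \<longleftrightarrow>
     (\<forall>x\<in>S. 0 \<le> n x) \<and>
     (\<forall>x\<in>S. n x = 0 \<longleftrightarrow> x = 0) \<and>
     (\<forall>x\<in>S. \<forall>c::real. n (c *\<^sub>R x) = \<bar>c\<bar> * n x) \<and>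
     (\<forall>x\<in>S. \<forall>y\<in>S. n (x + y) \<le> n x + n y)"

definition banach_subspace :: "'a::real_vector set \<Rightarrow> ('a \<Rightarrow> real) \<Rightarrow> bool" where
  "banach_subspace S n \<longleftrightarrow>
     subspace S \<and> is_norm_on S n \<and>
     (\<forall>x::nat \<Rightarrow> 'a. (\<forall>k. x k \<in> S) \<longrightarrow>
        (\<forall>e>0. \<exists>N. \<forall>p\<ge>N. \<forall>q\<ge>N. n (x p - x q) < e) \<longrightarrow>
        (\<exists>l\<in>S. (\<lambda>k. n (x k - l)) \<longlonglongrightarrow> 0))"

definition linear_on :: "'a::real_vector set \<Rightarrow> ('a \<Rightarrow> 'b::real_vector) \<Rightarrow> bool" where
  "linear_on S L \<longleftrightarrow>
     (\<forall>x\<in>S. \<forall>y\<in>S. L (x + y) = L x + L y) \<and>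
     (\<forall>x\<in>S. \<forall>c::real. L (c *\<^sub>R x) = c *\<^sub>R L x)"

definition weak_bounded :: "'a::real_normed_vector set \<Rightarrow> ('a \<Rightarrow> real) \<Rightarrow> ('a \<Rightarrow> 'a) \<Rightarrow> bool" where
  "weak_bounded S n1 L \<longleftrightarrow>
     (\<forall>\<epsilon>>0. \<exists>c>0. \<forall>f\<in>S. norm (L f) \<le> c * norm f + \<epsilon> * n1 f)"

end

theory Submission
  imports Defs
begin

text \<open>All three conditions say that \<open>\<L>\<close>, restricted to the unit ball
\<open>B = {f \<in> \<B>\<^sup>1. \<parallel>f\<parallel>\<^sub>1 \<le> 1}\<close> and viewed in the \<open>\<B>\<^sup>0\<close>-norm, is continuous at \<open>0\<close>.
A weak bound \<open>\<parallel>\<L>f\<parallel>\<^sub>0 \<le> c\<parallel>f\<parallel>\<^sub>0 + \<epsilon>\<parallel>f\<parallel>\<^sub>1\<close> gives this continuity at once; conversely,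
if \<open>\<parallel>\<L>g\<parallel>\<^sub>0 \<le> \<epsilon>\<close> on \<open>B \<inter> {\<parallel>g\<parallel>\<^sub>0 \<le> d}\<close>, then dividing \<open>f\<close> by
\<open>t = max \<parallel>f\<parallel>\<^sub>1 (\<parallel>f\<parallel>\<^sub>0 / d)\<close> lands in that set, whence \<open>\<parallel>\<L>f\<parallel>\<^sub>0 \<le> \<epsilon> t \<le> (\<epsilon>/d)\<parallel>f\<parallel>\<^sub>0 + \<epsilon>\<parallel>f\<parallel>\<^sub>1\<close>.
Condition (b) is the same continuity tested along families: \<open>(f\<^sub>\<epsilon> - f)/K\<close> lies in \<open>B\<close>
for a bound \<open>K\<close> on \<open>\<parallel>f\<^sub>\<epsilon> - f\<parallel>\<^sub>1\<close>, and every null sequence in \<open>B\<close> is such a family.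
Condition (c) is its \<open>\<epsilon>\<close>-\<open>\<delta>\<close> form.\<close>

lemma linear_on_scaleR: "linear_on S L \<Longrightarrow> x \<in> S \<Longrightarrow> L (c *\<^sub>R x) = c *\<^sub>R L x"
  unfolding linear_on_def by blast

lemma linear_on_0:
  assumes "linear_on S L" "subspace S"
  shows "L 0 = 0"
  using linear_on_scaleR[OF assms(1) subspace_0[OF assms(2)], of 0] by simp

lemma linear_on_diff:
  assumes L: "linear_on S L" and S: "subspace S" and "x \<in> S" "y \<in> S"
  shows "L (x - y) = L x - L y"
proof -
  have "(-1) *\<^sub>R y \<in> S" using subspace_scale[OF S \<open>y \<in> S\<close>] .
  then have "L (x + (-1) *\<^sub>R y) = L x + L ((-1) *\<^sub>R y)"
    using L \<open>x \<in> S\<close> unfolding linear_on_def by blast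
  then show ?thesis
    using linear_on_scaleR[OF L \<open>y \<in> S\<close>, of "-1"] by simp
qed

lemma is_norm_on_nonneg: "is_norm_on S n \<Longrightarrow> x \<in> S \<Longrightarrow> 0 \<le> n x"
  unfolding is_norm_on_def by simp

lemma is_norm_on_scaleR: "is_norm_on S n \<Longrightarrow> x \<in> S \<Longrightarrow> n (c *\<^sub>R x) = \<bar>c\<bar> * n x"
  unfolding is_norm_on_def by simp

lemma is_norm_on_0:
  assumes "is_norm_on S n" "subspace S"
  shows "n 0 = 0"
  using is_norm_on_scaleR[OF assms(1) subspace_0[OF assms(2)], of 0] by simp

lemma is_norm_on_diff_le:
  assumes n: "is_norm_on S n" and S: "subspace S" and "x \<in> S" "y \<in> S"
  shows "n (x - y) \<le> n x + n y"
proof -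
  have "(-1) *\<^sub>R y \<in> S" using subspace_scale[OF S \<open>y \<in> S\<close>] .
  then have "n (x + (-1) *\<^sub>R y) \<le> n x + n ((-1) *\<^sub>R y)"
    using n \<open>x \<in> S\<close> unfolding is_norm_on_def by blast
  then show ?thesis
    using is_norm_on_scaleR[OF n \<open>y \<in> S\<close>, of "-1"] by simp
qed

lemma LIMSEQ_imp_tendsto_at_right_0:
  assumes "X \<longlonglongrightarrow> l"
  shows "((\<lambda>\<epsilon>. X (nat \<lfloor>inverse \<epsilon>\<rfloor>)) \<longlongrightarrow> l) (at_right (0::real))"
proof -
  have "filterlim (\<lambda>\<epsilon>. nat \<lfloor>inverse \<epsilon>\<rfloor>) sequentially (at_right (0::real))"
    using filterlim_compose[OF filterlim_floor_sequentially filterlim_inverse_at_top_right]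
    by (rule filterlim_compose[OF filterlim_nat_sequentially])
  then show ?thesis by (rule filterlim_compose[OF assms])
qed

lemma tendsto_at_right_0_imp_LIMSEQ:
  assumes "(g \<longlongrightarrow> l) (at_right (0::real))"
  shows "(\<lambda>n. g (inverse (real (Suc n)))) \<longlonglongrightarrow> l"
proof -
  have "filterlim (\<lambda>n. inverse (real (Suc n))) (at_right 0) sequentially"
    by (rule tendsto_imp_filterlim_at_right[OF LIMSEQ_inverse_real_of_nat]) simp
  then show ?thesis by (rule filterlim_compose[OF assms])
qed

lemma weak_bound_from_local_bound:
  assumes S: "subspace S" and n1: "is_norm_on S n1" and L: "linear_on S L" and "0 < d"
    and bound: "\<And>g. g \<in> S \<Longrightarrow> n1 g \<le> 1 \<Longrightarrow> norm g \<le> d \<Longrightarrow> norm (L g) \<le> \<epsilon>"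
    and f: "f \<in> S"
  shows "norm (L f) \<le> \<epsilon> / d * norm f + \<epsilon> * n1 f"
proof -
  have "norm (L 0) \<le> \<epsilon>"
    using bound[of 0] \<open>0 < d\<close> subspace_0[OF S] is_norm_on_0[OF n1 S] by simp
  then have "0 \<le> \<epsilon>" using norm_ge_zero[of "L 0"] by linarith
  define t where "t = max (n1 f) (norm f / d)"
  have "0 \<le> t" using \<open>0 < d\<close> unfolding t_def by (simp add: max.coboundedI2)
  then consider "t = 0" | "0 < t" by linarith
  then show ?thesis
  proof cases
    case 1
    then have "f = 0" using \<open>0 < d\<close> unfolding t_def by (simp add: max_def split: if_splits)
    then show ?thesis using linear_on_0[OF L S] is_norm_on_0[OF n1 S] by simp
  next
    case 2
    define g where "g = (1 / t) *\<^sub>R f"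
    have "n1 f \<le> t" "norm f / d \<le> t" unfolding t_def by auto
    then have "n1 f \<le> t" "norm f \<le> d * t" using \<open>0 < d\<close> by (auto simp: pos_divide_le_eq mult.commute)
    then have "n1 g \<le> 1" "norm g \<le> d"
      using 2 is_norm_on_scaleR[OF n1 f] unfolding g_def by (auto simp: field_simps)
    then have "norm (L g) \<le> \<epsilon>" using bound subspace_scale[OF S f] unfolding g_def by blast
    moreover have "norm (L f) = t * norm (L g)"
      using 2 linear_on_scaleR[OF L f] unfolding g_def by simp
    ultimately have "norm (L f) \<le> t * \<epsilon>" using 2 by simp
    also have "\<dots> \<le> (norm f / d + n1 f) * \<epsilon>"
      using \<open>0 \<le> \<epsilon>\<close> \<open>0 < d\<close> is_norm_on_nonneg[OF n1 f] unfolding t_def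
      by (intro mult_right_mono) auto
    finally show ?thesis by (simp add: algebra_simps)
  qed
qed

lemma weak_bounded_iff_continuous_at_0_within_unit_ball:
  assumes S: "subspace S" and n1: "is_norm_on S n1" and L: "linear_on S L"
  shows "weak_bounded S n1 L \<longleftrightarrow> continuous (at 0 within {f\<in>S. n1 f \<le> 1}) L"
proof
  assume W: "weak_bounded S n1 L"
  show "continuous (at 0 within {f\<in>S. n1 f \<le> 1}) L"
    unfolding continuous_within_eps_delta
  proof (intro allI impI)
    fix e :: real assume "0 < e"
    then obtain c where "0 < c" and c: "\<forall>f\<in>S. norm (L f) \<le> c * norm f + e / 2 * n1 f"
      using W unfolding weak_bounded_def by (meson half_gt_zero)
    have "norm (L f) < e" if "f \<in> S" "n1 f \<le> 1" "norm f < e / (2 * c)" for f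
    proof -
      have "norm (L f) \<le> c * norm f + e / 2 * n1 f" using c that(1) by blast
      also have "\<dots> < c * (e / (2 * c)) + e / 2 * 1"
        using that \<open>0 < c\<close> \<open>0 < e\<close> by (intro add_less_le_mono mult_strict_left_mono mult_left_mono) auto
      finally show ?thesis using \<open>0 < c\<close> by simp
    qed
    then show "\<exists>d>0. \<forall>f\<in>{f\<in>S. n1 f \<le> 1}. dist f 0 < d \<longrightarrow> dist (L f) (L 0) < e"
      using \<open>0 < c\<close> \<open>0 < e\<close> linear_on_0[OF L S] by (intro exI[of _ "e / (2 * c)"]) auto
  qed
next
  assume "continuous (at 0 within {f\<in>S. n1 f \<le> 1}) L"
  show "weak_bounded S n1 L"
    unfolding weak_bounded_def
  proof (intro allI impI)
    fix \<epsilon> :: real assume "0 < \<epsilon>"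
    then obtain d where "0 < d" and d: "\<forall>f\<in>{f\<in>S. n1 f \<le> 1}. norm f < d \<longrightarrow> norm (L f) < \<epsilon>"
      using \<open>continuous _ L\<close> linear_on_0[OF L S] unfolding continuous_within_eps_delta
      by (metis diff_zero dist_norm)
    have "norm (L g) \<le> \<epsilon>" if "g \<in> S" "n1 g \<le> 1" "norm g \<le> d / 2" for g
      using d that \<open>0 < d\<close> by fastforce
    then have "\<forall>f\<in>S. norm (L f) \<le> \<epsilon> / (d / 2) * norm f + \<epsilon> * n1 f"
      using weak_bound_from_local_bound[OF S n1 L, of "d / 2"] \<open>0 < d\<close> by simp
    then show "\<exists>c>0. \<forall>f\<in>S. norm (L f) \<le> c * norm f + \<epsilon> * n1 f"
      using \<open>0 < d\<close> \<open>0 < \<epsilon>\<close> by (intro exI[of _ "\<epsilon> / (d / 2)"]) auto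
  qed
qed

lemma continuous_at_0_within_unit_ball_imp_tendsto:
  assumes S: "subspace S" and n1: "is_norm_on S n1" and L: "linear_on S L"
    and cont: "continuous (at 0 within {f\<in>S. n1 f \<le> 1}) L"
    and "f \<in> S" and in_S: "\<forall>\<^sub>F x in F. fe x \<in> S" and bounded: "\<forall>\<^sub>F x in F. n1 (fe x) \<le> C"
    and lim: "((\<lambda>x. norm (fe x - f)) \<longlongrightarrow> 0) F"
  shows "((\<lambda>x. norm (L (fe x) - L f)) \<longlongrightarrow> 0) F"
proof -
  define K where "K = \<bar>C\<bar> + n1 f + 1"
  have "0 < K" using is_norm_on_nonneg[OF n1 \<open>f \<in> S\<close>] unfolding K_def by simp
  define g where "g x = (1 / K) *\<^sub>R (fe x - f)" for x
  have ev: "\<forall>\<^sub>F x in F. g x \<in> {f\<in>S. n1 f \<le> 1} \<and> K *\<^sub>R L (g x) = L (fe x) - L f"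
    using in_S bounded
  proof eventually_elim
    case (elim x)
    have diff: "fe x - f \<in> S" using subspace_diff[OF S elim(1) \<open>f \<in> S\<close>] .
    have "g x \<in> S" unfolding g_def using subspace_scale[OF S diff] .
    have "n1 (fe x - f) \<le> K"
      using is_norm_on_diff_le[OF n1 S elim(1) \<open>f \<in> S\<close>] elim(2) unfolding K_def by linarith
    then have "n1 (g x) \<le> 1"
      using \<open>0 < K\<close> is_norm_on_scaleR[OF n1 diff] unfolding g_def by simp
    moreover have "K *\<^sub>R L (g x) = L (fe x) - L f"
      using \<open>0 < K\<close> linear_on_scaleR[OF L diff] linear_on_diff[OF L S elim(1) \<open>f \<in> S\<close>]
      unfolding g_def by simp
    ultimately show ?case using \<open>g x \<in> S\<close> by simp
  qed
  have "(g \<longlongrightarrow> 0) F"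
  proof -
    have "((\<lambda>x. norm (fe x - f) / K) \<longlongrightarrow> 0) F"
      using tendsto_divide_zero[OF lim] .
    then have "((\<lambda>x. norm (g x)) \<longlongrightarrow> 0) F"
      using \<open>0 < K\<close> by (simp add: g_def)
    then show ?thesis by (simp only: tendsto_norm_zero_iff)
  qed
  moreover have "\<forall>\<^sub>F x in F. g x \<in> {f\<in>S. n1 f \<le> 1}"
    using ev by (rule eventually_mono) simp
  ultimately have "((\<lambda>x. L (g x)) \<longlongrightarrow> L 0) F"
    using continuous_within_tendsto_compose[OF cont] by blast
  from tendsto_scaleR[OF tendsto_const this]
  have "((\<lambda>x. K *\<^sub>R L (g x)) \<longlongrightarrow> 0) F"
    using linear_on_0[OF L S] by simp
  moreover have "\<forall>\<^sub>F x in F. K *\<^sub>R L (g x) = L (fe x) - L f"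
    using ev by (rule eventually_mono) simp
  ultimately have "((\<lambda>x. L (fe x) - L f) \<longlongrightarrow> 0) F"
    by (rule Lim_transform_eventually)
  then show ?thesis by (simp add: tendsto_norm_zero_iff)
qed

lemma continuous_at_0_within_unit_ball_iff_tendsto_at_right:
  fixes L :: "'a::real_normed_vector \<Rightarrow> 'b::real_normed_vector"
  assumes S: "subspace S" and n1: "is_norm_on S n1" and L: "linear_on S L"
  shows "continuous (at 0 within {f\<in>S. n1 f \<le> 1}) L \<longleftrightarrow>
    (\<forall>(fe::real \<Rightarrow> 'a) f. f \<in> S \<longrightarrow> (\<forall>\<epsilon>>0. fe \<epsilon> \<in> S) \<longrightarrow>
       ((\<lambda>\<epsilon>. norm (fe \<epsilon> - f)) \<longlongrightarrow> 0) (at_right 0) \<longrightarrow>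
       (\<exists>C. \<forall>\<epsilon>>0. n1 (fe \<epsilon>) \<le> C) \<longrightarrow>
       ((\<lambda>\<epsilon>. norm (L (fe \<epsilon>) - L f)) \<longlongrightarrow> 0) (at_right 0))"
    (is "?cont \<longleftrightarrow> ?tendsto")
proof
  assume ?cont
  show ?tendsto
  proof (intro allI impI)
    fix fe :: "real \<Rightarrow> 'a" and f
    assume "f \<in> S" and fe: "\<forall>\<epsilon>>0. fe \<epsilon> \<in> S"
      and lim: "((\<lambda>\<epsilon>. norm (fe \<epsilon> - f)) \<longlongrightarrow> 0) (at_right 0)"
      and "\<exists>C. \<forall>\<epsilon>>0. n1 (fe \<epsilon>) \<le> C"
    then obtain C where C: "\<forall>\<epsilon>>0. n1 (fe \<epsilon>) \<le> C" by blast
    have pos: "\<forall>\<^sub>F \<epsilon> in at_right 0. 0 < (\<epsilon>::real)" by (rule eventually_at_right_less)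
    have "\<forall>\<^sub>F \<epsilon> in at_right 0. fe \<epsilon> \<in> S" using pos by (rule eventually_mono) (use fe in blast)
    moreover have "\<forall>\<^sub>F \<epsilon> in at_right 0. n1 (fe \<epsilon>) \<le> C" using pos by (rule eventually_mono) (use C in blast)
    ultimately show "((\<lambda>\<epsilon>. norm (L (fe \<epsilon>) - L f)) \<longlongrightarrow> 0) (at_right 0)"
      by (rule continuous_at_0_within_unit_ball_imp_tendsto[OF S n1 L \<open>?cont\<close> \<open>f \<in> S\<close> _ _ lim])
  qed
next
  assume H: ?tendsto
  show ?cont
  proof (rule continuous_within_sequentiallyI)
    fix u :: "nat \<Rightarrow> 'a"
    assume "u \<longlonglongrightarrow> 0" and u: "\<forall>n. u n \<in> {f\<in>S. n1 f \<le> 1}"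
    define fe where "fe \<epsilon> = u (nat \<lfloor>inverse \<epsilon>\<rfloor>)" for \<epsilon> :: real
    have "(fe \<longlongrightarrow> 0) (at_right 0)"
      unfolding fe_def by (rule LIMSEQ_imp_tendsto_at_right_0[OF \<open>u \<longlonglongrightarrow> 0\<close>])
    then have "((\<lambda>\<epsilon>. norm (L (fe \<epsilon>) - L 0)) \<longlongrightarrow> 0) (at_right 0)"
      using H[rule_format, of 0 fe] u subspace_0[OF S]
      unfolding fe_def tendsto_norm_zero_iff by auto
    then have "((\<lambda>\<epsilon>. L (fe \<epsilon>)) \<longlongrightarrow> L 0) (at_right 0)"
      unfolding tendsto_norm_zero_iff LIM_zero_iff .
    from tendsto_at_right_0_imp_LIMSEQ[OF this]
    have "(\<lambda>n. L (fe (inverse (real (Suc n))))) \<longlonglongrightarrow> L 0" .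
    moreover have "fe (inverse (real (Suc n))) = u (Suc n)" for n
      unfolding fe_def by (metis floor_of_nat inverse_inverse_eq nat_int)
    ultimately have "(\<lambda>n. L (u (Suc n))) \<longlonglongrightarrow> L 0" by simp
    then show "(\<lambda>n. L (u n)) \<longlonglongrightarrow> L 0"
      by (rule LIMSEQ_imp_Suc)
  qed
qed

lemma tendsto_SUP_norm_iff_continuous_at_0:
  fixes G :: "'a::real_normed_vector \<Rightarrow> 'b::real_normed_vector"
  assumes "0 \<in> B" "G 0 = 0"
  shows "((\<lambda>\<delta>. SUP f\<in>{f\<in>B. norm f \<le> \<delta>}. ereal (norm (G f))) \<longlongrightarrow> 0) (at_right 0)
    \<longleftrightarrow> continuous (at 0 within B) G"
    (is "((\<lambda>\<delta>. ?M \<delta>) \<longlongrightarrow> 0) _ \<longleftrightarrow> _")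
proof
  assume lim: "(?M \<longlongrightarrow> 0) (at_right 0)"
  show "continuous (at 0 within B) G"
    unfolding continuous_within_eps_delta
  proof (intro allI impI)
    fix e :: real assume "0 < e"
    then have "\<forall>\<^sub>F \<delta> in at_right 0. ?M \<delta> < ereal e"
      using order_tendstoD(2)[OF lim] by (simp add: zero_ereal_def)
    then obtain d where "0 < d" and d: "?M d < ereal e"
      using eventually_happens'[OF trivial_limit_at_right_real eventually_conj[OF eventually_at_right_less]]
      by blast
    have "norm (G f) < e" if "f \<in> B" "norm f < d" for f
    proof -
      have "ereal (norm (G f)) \<le> ?M d" using that by (intro SUP_upper) auto
      then have "ereal (norm (G f)) < ereal e" using d by (rule le_less_trans)
      then show ?thesis by simp
    qed
    then show "\<exists>d>0. \<forall>f\<in>B. dist f 0 < d \<longrightarrow> dist (G f) (G 0) < e"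
      using \<open>0 < d\<close> \<open>G 0 = 0\<close> by auto
  qed
next
  assume "continuous (at 0 within B) G"
  show "(?M \<longlongrightarrow> 0) (at_right 0)"
  proof (rule order_tendstoI)
    fix a :: ereal assume "a < 0"
    have "0 \<le> ?M \<delta>" if "0 < \<delta>" for \<delta>
      using \<open>0 \<in> B\<close> \<open>G 0 = 0\<close> that by (intro SUP_upper2[of 0]) (auto simp: zero_ereal_def)
    then show "\<forall>\<^sub>F \<delta> in at_right 0. a < ?M \<delta>"
      using \<open>a < 0\<close> by (auto intro: eventually_mono[OF eventually_at_right_less] less_le_trans)
  next
    fix a :: ereal assume "0 < a"
    then obtain e :: real where "0 < e" "ereal e < a"
      by (metis dense ereal_dense2 ereal_less(2) less_trans)
    then obtain d where "0 < d" and d: "\<forall>f\<in>B. norm f < d \<longrightarrow> norm (G f) < e"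
      using \<open>continuous _ G\<close> \<open>G 0 = 0\<close> unfolding continuous_within_eps_delta by force
    have "?M \<delta> \<le> ereal e" if "\<delta> < d" for \<delta>
      using d that by (intro SUP_least) auto
    moreover have "\<forall>\<^sub>F \<delta> in at_right 0. \<delta> < d"
      using \<open>0 < d\<close> eventually_at_right_field by blast
    ultimately show "\<forall>\<^sub>F \<delta> in at_right 0. ?M \<delta> < a"
      using \<open>ereal e < a\<close> by (auto elim!: eventually_mono intro: le_less_trans)
  qed
qed

theorem mainTheorem5:
  fixes S :: "'a::banach set" and n1 :: "'a \<Rightarrow> real" and L :: "'a \<Rightarrow> 'a"
  assumes "banach_subspace S n1"
    and "linear_on S L"
  shows "(weak_bounded S n1 L
            \<longleftrightarrow> (\<forall>(fe::real \<Rightarrow> 'a) f. f \<in> S \<longrightarrow> (\<forall>\<epsilon>>0. fe \<epsilon> \<in> S) \<longrightarrow>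
                   ((\<lambda>\<epsilon>. norm (fe \<epsilon> - f)) \<longlongrightarrow> 0) (at_right 0) \<longrightarrow>
                   (\<exists>C. \<forall>\<epsilon>>0. n1 (fe \<epsilon>) \<le> C) \<longrightarrow>
                   ((\<lambda>\<epsilon>. norm (L (fe \<epsilon>) - L f)) \<longlongrightarrow> 0) (at_right 0)))
       \<and> (weak_bounded S n1 L
            \<longleftrightarrow> ((\<lambda>\<delta>. SUP f\<in>{f\<in>S. n1 f \<le> 1 \<and> norm f \<le> \<delta>}. ereal (norm (L f)))
                   \<longlongrightarrow> 0) (at_right 0))"
    (is "(?a \<longleftrightarrow> ?b) \<and> (?a \<longleftrightarrow> ?c)")
proof -
  have S: "subspace S" and n1: "is_norm_on S n1"
    using assms(1) unfolding banach_subspace_def by auto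
  note L = assms(2)
  let ?B = "{f\<in>S. n1 f \<le> 1}"
  have a: "?a \<longleftrightarrow> continuous (at 0 within ?B) L"
    by (rule weak_bounded_iff_continuous_at_0_within_unit_ball[OF S n1 L])
  have b: "?b \<longleftrightarrow> continuous (at 0 within ?B) L"
    by (rule continuous_at_0_within_unit_ball_iff_tendsto_at_right[OF S n1 L, symmetric])
  have "0 \<in> ?B" using subspace_0[OF S] is_norm_on_0[OF n1 S] by simp
  moreover have "{f\<in>?B. norm f \<le> \<delta>} = {f\<in>S. n1 f \<le> 1 \<and> norm f \<le> \<delta>}" for \<delta> by auto
  ultimately have c: "?c \<longleftrightarrow> continuous (at 0 within ?B) L"
    using tendsto_SUP_norm_iff_continuous_at_0[of ?B L] linear_on_0[OF L S] by simp
  from a b c show ?thesis by blast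
qed

end
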